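(* In the setting of the context: (i) for every $C<0$, $\lim_{R\to+\infty}\mu_{\mathrm{A}}(B^{C,+}_{\mathfrak{a}}(R))/\mu_{\mathrm{A}}(B^+_{\mathfrak{a}}(R))=1$; (ii) for every $\varepsilon\in(0,1)$ there exists $\delta_\varepsilon>0$ such that $\limsup_{R\to+\infty}\mu_{\mathrm{A}}(B^+_{\mathfrak{a}}(R))/\mu_{\mathrm{A}}(B^+_{\mathfrak{a}}(R,\delta_\varepsilon))\le\min\{1+\varepsilon,\frac{1}{1-\varepsilon}\}$.
   Context: $N\ge2$; traceless real diagonal matrices form $\mathfrak{a}$ with norm from $\mathrm{Tr}(XY^T)$. $\mathscr{I}_0=\{I_1,\dots,I_{k_0}\}$: partition of $\{1,\dots,N\}$ into nonempty consecutive blocks; $i\sim j$ iff same block. $\mathfrak{a}_{\mathscr{I}_0}$: elements of $\mathfrak{a}$ constant on blocks, written $\mathrm{diag}(c_1\mathrm{id}_{|I_1|},\dots,c_{k_0}\mathrm{id}_{|I_{k_0}|})$; $\mathfrak{a}^+_{\mathscr{I}_0}$: those with $\sum_{s\le k}c_s|I_s|\ge0$ for $k<k_0$. $\mathfrak{a}_{\mathrm{M}_{\mathscr{I}_0}}$: elements of $\mathfrak{a}$ with zero trace on each block; $\mathfrak{a}^+_{\mathrm{M}_{\mathscr{I}_0}}$: those with $x_i\ge x_j$ for $i<j$, $i\sim j$. $\mu_{\mathrm{A}}$ is the measure on $\mathfrak{a}^+_{\mathrm{M}_{\mathscr{I}_0}}\times\mathfrak{a}_{\mathscr{I}_0}$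 with density $\prod_{i<j,i\sim j}\frac{e^{x_i-x_j}-e^{x_j-x_i}}{2}\cdot\prod_{i<j,i\not\sim j}e^{y_i-y_j}$ at $(x,y)$ with respect to the Lebesgue measure induced by the trace-form inner product. $B_{\mathfrak{a}}(R):=\{(x,y)\in\mathfrak{a}^+_{\mathrm{M}_{\mathscr{I}_0}}\times\mathfrak{a}_{\mathscr{I}_0}:\|x+y\|\le R\}$, $B^+_{\mathfrak{a}}(R):=B_{\mathfrak{a}}(R)\cap(\mathfrak{a}^+_{\mathrm{M}_{\mathscr{I}_0}}\times\mathfrak{a}^+_{\mathscr{I}_0})$, $B^+_{\mathfrak{a}}(R,\delta):=B^+_{\mathfrak{a}}(R)\setminus B^+_{\mathfrak{a}}(\delta R)$. For $C\in\mathbb{R}$, $\mathcal{C}_C$ is the set of $\mathrm{diag}(z_1,\dots,z_N)\in\mathfrak{a}$ with $z_i-z_j\ge\max\{0,C\}$ for $i<j$ in the same block and $\sum_{i\in I_1\cup\dots\cup I_k}z_i\ge C$ for $1\le k<k_0$; $B^{C,+}_{\mathfrak{a}}(R):=\{(x,y)\in B_{\mathfrak{a}}(R):x+y\in\mathcal{C}_C\}$. *)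

theory Defs
  imports "HOL-Analysis.Analysis"
begin

text \<open>Indices are 0-based: a diagonal matrix diag(z_1,...,z_N) is represented
  by a function z :: nat => real with z i the (i+1)-th diagonal entry for i < N and z i = 0
  for i >= N. The partition into consecutive nonempty blocks I_1,...,I_k0 is given by the list
  ns of block sizes (ns ! s = |I_(s+1)|), so k0 = length ns and N = sum_list ns.\<close>

definition cut :: "nat list \<Rightarrow> nat \<Rightarrow> nat" where
  "cut ns k = sum_list (take k ns)"

definition blk :: "nat list \<Rightarrow> nat \<Rightarrow> nat set" where
  "blk ns s = {cut ns s ..< cut ns (Suc s)}"

definition valid_partition :: "nat list \<Rightarrow> nat \<Rightarrow> bool" where
  "valid_partition ns N \<longleftrightarrow> (\<forall>n\<in>set ns. 0 < n) \<and> sum_list ns = N"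

definition same_blk :: "nat list \<Rightarrow> nat \<Rightarrow> nat \<Rightarrow> bool" where
  "same_blk ns i j \<longleftrightarrow> (\<exists>s<length ns. i \<in> blk ns s \<and> j \<in> blk ns s)"

definition afrak :: "nat \<Rightarrow> (nat \<Rightarrow> real) set" where
  "afrak N = {z. (\<forall>i\<ge>N. z i = 0) \<and> (\<Sum>i<N. z i) = 0}"

text \<open>Norm from the trace form Tr(X Y^T).\<close>
definition anorm :: "nat \<Rightarrow> (nat \<Rightarrow> real) \<Rightarrow> real" where
  "anorm N z = sqrt (\<Sum>i<N. (z i)\<^sup>2)"

definition aI :: "nat list \<Rightarrow> (nat \<Rightarrow> real) set" where
  "aI ns = {y \<in> afrak (sum_list ns). \<forall>i j. same_blk ns i j \<longrightarrow> y i = y j}"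

definition aplusI :: "nat list \<Rightarrow> (nat \<Rightarrow> real) set" where
  "aplusI ns = {y \<in> aI ns. \<forall>k. 1 \<le> k \<and> k < length ns \<longrightarrow> (\<Sum>i<cut ns k. y i) \<ge> 0}"

definition aM :: "nat list \<Rightarrow> (nat \<Rightarrow> real) set" where
  "aM ns = {x \<in> afrak (sum_list ns). \<forall>s<length ns. (\<Sum>i\<in>blk ns s. x i) = 0}"

definition aplusM :: "nat list \<Rightarrow> (nat \<Rightarrow> real) set" where
  "aplusM ns = {x \<in> aM ns. \<forall>i j. i < j \<and> same_blk ns i j \<longrightarrow> x i \<ge> x j}"

text \<open>Lebesgue measure on afrak induced by the trace-form inner product: push forward of
  Lebesgue measure on R^(N-1) along the parametrisation w |-> (w_1,..,w_(N-1), -sum w),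
  whose volume distortion factor is sqrt N.\<close>
definition embedA :: "nat \<Rightarrow> (nat \<Rightarrow> real) \<Rightarrow> (nat \<Rightarrow> real)" where
  "embedA N w = (\<lambda>i. if i < N - 1 then w i else if i = N - 1 then - (\<Sum>j<N - 1. w j) else 0)"

definition lebA :: "nat \<Rightarrow> (nat \<Rightarrow> real) measure" where
  "lebA N = density (distr (PiM {..<N - 1} (\<lambda>_. lborel)) (PiM UNIV (\<lambda>_. borel)) (embedA N))
              (\<lambda>_. ennreal (sqrt (real N)))"

text \<open>Orthogonal decomposition afrak = afrak_M (+) afrak_I0, z |-> (z - blockavg z, blockavg z);
  this is an isometry, so it carries Lebesgue measure of afrak to the Lebesgue measure
  of the product afrak_M x afrak_I0.\<close>
definition blockavg :: "nat list \<Rightarrow> (nat \<Rightarrow> real) \<Rightarrow> (nat \<Rightarrow> real)" where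
  "blockavg ns z = (\<lambda>i. \<Sum>s<length ns. if i \<in> blk ns s
        then (\<Sum>j\<in>blk ns s. z j) / real (card (blk ns s)) else 0)"

definition decompA :: "nat list \<Rightarrow> (nat \<Rightarrow> real) \<Rightarrow> (nat \<Rightarrow> real) \<times> (nat \<Rightarrow> real)" where
  "decompA ns z = (\<lambda>i. z i - blockavg ns z i, blockavg ns z)"

definition lebAMI :: "nat list \<Rightarrow> ((nat \<Rightarrow> real) \<times> (nat \<Rightarrow> real)) measure" where
  "lebAMI ns = distr (lebA (sum_list ns))
      (PiM UNIV (\<lambda>_. borel) \<Otimes>\<^sub>M PiM UNIV (\<lambda>_. borel)) (decompA ns)"

definition densA :: "nat list \<Rightarrow> (nat \<Rightarrow> real) \<Rightarrow> (nat \<Rightarrow> real) \<Rightarrow> real" where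
  "densA ns x y = (\<Prod>i<sum_list ns. \<Prod>j\<in>{i<..<sum_list ns}.
      if same_blk ns i j then (exp (x i - x j) - exp (x j - x i)) / 2 else exp (y i - y j))"

definition muA :: "nat list \<Rightarrow> ((nat \<Rightarrow> real) \<times> (nat \<Rightarrow> real)) measure" where
  "muA ns = density (lebAMI ns)
      (\<lambda>p. indicator (aplusM ns \<times> aI ns) p * ennreal (densA ns (fst p) (snd p)))"

definition Ba :: "nat list \<Rightarrow> real \<Rightarrow> ((nat \<Rightarrow> real) \<times> (nat \<Rightarrow> real)) set" where
  "Ba ns R = {(x, y). x \<in> aplusM ns \<and> y \<in> aI ns \<and> anorm (sum_list ns) (\<lambda>i. x i + y i) \<le> R}"

definition Bplus :: "nat list \<Rightarrow> real \<Rightarrow> ((nat \<Rightarrow> real) \<times> (nat \<Rightarrow> real)) set" where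
  "Bplus ns R = Ba ns R \<inter> (aplusM ns \<times> aplusI ns)"

definition Bplus_delta :: "nat list \<Rightarrow> real \<Rightarrow> real \<Rightarrow> ((nat \<Rightarrow> real) \<times> (nat \<Rightarrow> real)) set" where
  "Bplus_delta ns R \<delta> = Bplus ns R - Bplus ns (\<delta> * R)"

definition coneC :: "nat list \<Rightarrow> real \<Rightarrow> (nat \<Rightarrow> real) set" where
  "coneC ns C = {z \<in> afrak (sum_list ns).
      (\<forall>i j. i < j \<and> same_blk ns i j \<longrightarrow> z i - z j \<ge> max 0 C) \<and>
      (\<forall>k. 1 \<le> k \<and> k < length ns \<longrightarrow> (\<Sum>i<cut ns k. z i) \<ge> C)}"

definition BCplus :: "nat list \<Rightarrow> real \<Rightarrow> real \<Rightarrow> ((nat \<Rightarrow> real) \<times> (nat \<Rightarrow> real)) set" where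
  "BCplus ns C R = {(x, y) \<in> Ba ns R. (\<lambda>i. x i + y i) \<in> coneC ns C}"

end

theory Submission
  imports Defs
begin

text \<open>In the coordinate $z = x + y$ on $\mathfrak a$ the density of $\mu_A$ is a product of
  factors $\sinh(z_i - z_j)$ (same block) and $e^{\bar z_i - \bar z_j}$ (different blocks, $\bar z$
  the block average), so it is at most $e^{\langle 2\rho, z\rangle}$ with
  $2\rho = (N-1, N-3, \dots, 1-N)$. Translating by $t \cdot 2\rho$ maps $B^+_{\mathfrak a}(R)$ into
  $B^+_{\mathfrak a}(R + t|2\rho|)$ and multiplies the density by at least $e^{t|2\rho|^2}$, so
  $\mu_A(B^+_{\mathfrak a}(R))$ grows at least like $e^{|2\rho| R}$. On the other hand, on
  $B^{C,+}_{\mathfrak a}(R) \setminus B^+_{\mathfrak a}(R)$ some partial sum of $z$ is negative, which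
  forces $\langle 2\rho, z\rangle \le \sqrt{|2\rho|^2 - 1}\,|z|$, and on $B^+_{\mathfrak a}(R/2)$ we have
  $\langle 2\rho, z\rangle \le |2\rho| R/2$. Both sets lie in a box of volume $O(R^{N-1})$, so their
  measures are $O(R^{N-1} e^{aR})$ with $a < |2\rho|$, negligible against
  $\mu_A(B^+_{\mathfrak a}(R))$. This gives (i), and (ii) with $\delta = 1/2$, where the limsup is
  in fact $1$.\<close>

abbreviation borel_seq :: "(nat \<Rightarrow> real) measure" where
  "borel_seq \<equiv> PiM UNIV (\<lambda>_. borel)"

abbreviation lborel_coords :: "nat \<Rightarrow> (nat \<Rightarrow> real) measure" where
  "lborel_coords N \<equiv> PiM {..<N - 1} (\<lambda>_. lborel)"

lemma pred_all_imp:
  assumes "\<And>i. P i \<Longrightarrow> Measurable.pred M (Q i)"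
  shows "Measurable.pred M (\<lambda>z. \<forall>i::nat. P i \<longrightarrow> Q i z)"
proof (rule pred_intros_countable(1))
  show "Measurable.pred M (\<lambda>z. P i \<longrightarrow> Q i z)" for i
    by (cases "P i") (simp_all add: assms measurable_const)
qed

lemma pred_all_all_imp:
  assumes "\<And>i j. P i j \<Longrightarrow> Measurable.pred M (Q i j)"
  shows "Measurable.pred M (\<lambda>z. \<forall>i::nat. \<forall>j::nat. P i j \<longrightarrow> Q i j z)"
proof (rule pred_intros_countable(1))
  show "Measurable.pred M (\<lambda>z. \<forall>j::nat. P i j \<longrightarrow> Q i j z)" for i
    by (rule pred_all_imp) (rule assms)
qed

lemma measurable_component_seq [measurable]: "(\<lambda>z. z i) \<in> borel_measurable borel_seq"
  by (rule measurable_component_singleton) simp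

lemma borel_measurable_sum_seq [measurable]: "(\<lambda>z. sum z A) \<in> borel_measurable borel_seq"
  using borel_measurable_sum[of A "\<lambda>i z. z i" borel_seq] by simp

lemma pred_component_le [measurable]: "Measurable.pred borel_seq (\<lambda>z. z j \<le> z i)"
  unfolding pred_def by (intro borel_measurable_le measurable_component_seq)

lemma pred_component_eq [measurable]: "Measurable.pred borel_seq (\<lambda>z. z i = z j)"
  unfolding pred_def by (intro borel_measurable_eq measurable_component_seq)

lemma space_borel_seq [simp]: "space borel_seq = UNIV"
  by (simp add: space_PiM)

lemma space_borel_seq_pair [simp]: "space (borel_seq \<Otimes>\<^sub>M borel_seq) = UNIV"
  by (simp add: space_pair_measure)

lemma sets_afrak [measurable]: "afrak N \<in> sets borel_seq"
proof -
  have "Measurable.pred borel_seq (\<lambda>z. z \<in> afrak N)"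
    unfolding afrak_def mem_Collect_eq by (intro pred_intros_logic pred_all_imp) measurable
  then show ?thesis by (simp add: pred_def)
qed

lemma sets_aM [measurable]: "aM ns \<in> sets borel_seq"
proof -
  have "Measurable.pred borel_seq (\<lambda>z. z \<in> aM ns)"
    unfolding aM_def mem_Collect_eq by (intro pred_intros_logic pred_all_imp) measurable
  then show ?thesis by (simp add: pred_def)
qed

lemma sets_aplusM [measurable]: "aplusM ns \<in> sets borel_seq"
proof -
  have "Measurable.pred borel_seq (\<lambda>z. z \<in> aplusM ns)"
    unfolding aplusM_def mem_Collect_eq by (intro pred_intros_logic pred_all_all_imp) measurable
  then show ?thesis by (simp add: pred_def)
qed

lemma sets_aI [measurable]: "aI ns \<in> sets borel_seq"
proof -
  have "Measurable.pred borel_seq (\<lambda>z. z \<in> aI ns)"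
    unfolding aI_def mem_Collect_eq by (intro pred_intros_logic pred_all_all_imp) measurable
  then show ?thesis by (simp add: pred_def)
qed

lemma sets_aplusI [measurable]: "aplusI ns \<in> sets borel_seq"
proof -
  have "Measurable.pred borel_seq (\<lambda>z. z \<in> aplusI ns)"
    unfolding aplusI_def mem_Collect_eq by (intro pred_intros_logic pred_all_imp) measurable
  then show ?thesis by (simp add: pred_def)
qed

lemma sets_coneC [measurable]: "coneC ns C \<in> sets borel_seq"
proof -
  have "Measurable.pred borel_seq (\<lambda>z. z \<in> coneC ns C)"
    unfolding coneC_def mem_Collect_eq by (intro pred_intros_logic pred_all_imp pred_all_all_imp) measurable
  then show ?thesis by (simp add: pred_def)
qed

lemma measurable_pair_sum: "(\<lambda>p. \<lambda>i. fst p i + snd p i) \<in> measurable (borel_seq \<Otimes>\<^sub>M borel_seq) borel_seq"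
  by (rule measurable_PiM_single')
    (auto intro!: borel_measurable_add measurable_compose[OF measurable_fst measurable_component_seq]
      measurable_compose[OF measurable_snd measurable_component_seq])

lemma sets_aplusM_times_aI: "aplusM ns \<times> aI ns \<in> sets (borel_seq \<Otimes>\<^sub>M borel_seq)"
  by (intro pair_measureI sets_aplusM sets_aI)

lemma sets_pair_sum_vimage:
  "A \<in> sets borel_seq \<Longrightarrow> (\<lambda>p i. fst p i + snd p i) -` A \<in> sets (borel_seq \<Otimes>\<^sub>M borel_seq)"
  using measurable_sets[OF measurable_pair_sum, of A] by simp

lemma sets_anorm_le: "{z. anorm N z \<le> R} \<in> sets borel_seq"
proof -
  have "Measurable.pred borel_seq (\<lambda>z. anorm N z \<le> R)"
    unfolding anorm_def by measurable
  then show ?thesis by (simp add: pred_def)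
qed

lemma sets_Ba: "Ba ns R \<in> sets (borel_seq \<Otimes>\<^sub>M borel_seq)"
proof -
  have "Ba ns R = aplusM ns \<times> aI ns \<inter> (\<lambda>p i. fst p i + snd p i) -` {z. anorm (sum_list ns) z \<le> R}"
    by (auto simp: Ba_def)
  also have "\<dots> \<in> sets (borel_seq \<Otimes>\<^sub>M borel_seq)"
    by (intro sets.Int sets_aplusM_times_aI sets_pair_sum_vimage sets_anorm_le)
  finally show ?thesis .
qed

lemma sets_Bplus: "Bplus ns R \<in> sets (borel_seq \<Otimes>\<^sub>M borel_seq)"
  unfolding Bplus_def by (intro sets.Int pair_measureI sets_Ba sets_aplusM sets_aplusI)

lemma sets_BCplus: "BCplus ns C R \<in> sets (borel_seq \<Otimes>\<^sub>M borel_seq)"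
proof -
  have "BCplus ns C R = Ba ns R \<inter> (\<lambda>p i. fst p i + snd p i) -` coneC ns C"
    by (auto simp: BCplus_def)
  also have "\<dots> \<in> sets (borel_seq \<Otimes>\<^sub>M borel_seq)"
    by (intro sets.Int sets_Ba sets_pair_sum_vimage sets_coneC)
  finally show ?thesis .
qed

lemma measurable_blockavg: "blockavg ns \<in> measurable borel_seq borel_seq"
proof (rule measurable_PiM_single')
  show "(\<lambda>z. blockavg ns z i) \<in> borel_measurable borel_seq" for i
    unfolding blockavg_def by (intro borel_measurable_sum) (simp add: borel_measurable_divide)
qed simp

lemma measurable_decompA: "decompA ns \<in> measurable borel_seq (borel_seq \<Otimes>\<^sub>M borel_seq)"
proof -
  have "(\<lambda>z. blockavg ns z i) \<in> borel_measurable borel_seq" for i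
    using measurable_blockavg[THEN measurable_compose, OF measurable_component_seq] by simp
  then show ?thesis
    unfolding decompA_def using measurable_blockavg
    by (intro measurable_Pair measurable_PiM_single') (simp_all add: borel_measurable_diff)
qed

lemma measurable_embedA: "embedA N \<in> measurable (lborel_coords N) borel_seq"
proof (rule measurable_PiM_single')
  have coord: "(\<lambda>w. w i) \<in> borel_measurable (lborel_coords N)" if "i < N - 1" for i
    using that measurable_component_singleton[of i "{..<N - 1}" "\<lambda>_. lborel"] by simp
  then have "(\<lambda>w. \<Sum>j<N - 1. w j) \<in> borel_measurable (lborel_coords N)"
    by (intro borel_measurable_sum) simp
  then show "(\<lambda>w. embedA N w i) \<in> borel_measurable (lborel_coords N)" for i
    unfolding embedA_def using coord by (cases "i < N - 1") simp_all
qed (simp add: space_PiM)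

lemma borel_measurable_densA:
  "(\<lambda>p. densA ns (fst p) (snd p)) \<in> borel_measurable (borel_seq \<Otimes>\<^sub>M borel_seq)"
proof -
  have "(\<lambda>p. fst p i) \<in> borel_measurable (borel_seq \<Otimes>\<^sub>M borel_seq)"
    "(\<lambda>p. snd p i) \<in> borel_measurable (borel_seq \<Otimes>\<^sub>M borel_seq)" for i
    by (rule measurable_compose[OF measurable_fst measurable_component_seq],
        rule measurable_compose[OF measurable_snd measurable_component_seq])
  then show ?thesis
    unfolding densA_def by (intro borel_measurable_prod) (simp add: borel_measurable_diff)
qed

lemma sets_lebAMI [simp]: "sets (lebAMI ns) = sets (borel_seq \<Otimes>\<^sub>M borel_seq)"
  by (simp add: lebAMI_def)

lemma sets_muA [simp]: "sets (muA ns) = sets (borel_seq \<Otimes>\<^sub>M borel_seq)"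
  by (simp add: muA_def)

lemma cut_0 [simp]: "cut ns 0 = 0"
  by (simp add: cut_def)

lemma cut_mono: "s \<le> t \<Longrightarrow> cut ns s \<le> cut ns t"
  using take_add[of s "t - s" ns] by (simp add: cut_def)

lemma cut_ge: "length ns \<le> k \<Longrightarrow> cut ns k = sum_list ns"
  by (simp add: cut_def)

lemma cut_le_sum_list: "cut ns k \<le> sum_list ns"
  using cut_mono[of k "max k (length ns)" ns] by (simp add: cut_ge)

lemma blk_less: "i \<in> blk ns s \<Longrightarrow> j \<in> blk ns t \<Longrightarrow> s < t \<Longrightarrow> i < j"
  using cut_mono[of "Suc s" t ns] by (auto simp: blk_def)

lemma blk_unique: "i \<in> blk ns s \<Longrightarrow> i \<in> blk ns t \<Longrightarrow> s = t"
  using blk_less[of i ns s i t] blk_less[of i ns t i s] by (metis less_irrefl nat_neq_iff)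

lemma blk_empty: "length ns \<le> s \<Longrightarrow> blk ns s = {}"
  by (simp add: blk_def cut_ge)

lemma blk_subset: "blk ns s \<subseteq> {..<sum_list ns}"
  using cut_le_sum_list[of ns "Suc s"] by (auto simp: blk_def)

lemma UN_blk: "(\<Union>s<k. blk ns s) = {..<cut ns k}"
proof (induction k)
  case (Suc k)
  have "{..<cut ns k} \<union> blk ns k = {..<cut ns (Suc k)}"
    using cut_mono[of k "Suc k" ns] by (auto simp: blk_def)
  then show ?case using Suc by (simp add: lessThan_Suc Un_commute)
qed simp

lemma same_blk_iff: "i \<in> blk ns s \<Longrightarrow> j \<in> blk ns t \<Longrightarrow> same_blk ns i j \<longleftrightarrow> s = t"
  unfolding same_blk_def using blk_unique blk_empty by (metis empty_iff not_le)

lemma same_blk_less: "same_blk ns i j \<Longrightarrow> i < sum_list ns \<and> j < sum_list ns"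
  unfolding same_blk_def using blk_subset by blast

lemma sum_lessThan_cut: "sum f {..<cut ns k} = (\<Sum>s<k. sum f (blk ns s))"
proof -
  have "sum f {..<cut ns k} = sum f (\<Union>s<k. blk ns s)"
    by (simp add: UN_blk)
  also have "\<dots> = (\<Sum>s<k. sum f (blk ns s))"
  proof (rule sum.UNION_disjoint)
    show "\<forall>s\<in>{..<k}. \<forall>t\<in>{..<k}. s \<noteq> t \<longrightarrow> blk ns s \<inter> blk ns t = {}"
      using blk_unique by blast
  qed (auto simp: blk_def)
  finally show ?thesis .
qed

lemma sum_lessThan_sum_list: "sum f {..<sum_list ns} = (\<Sum>s<length ns. sum f (blk ns s))"
  using sum_lessThan_cut[of f ns "length ns"] by (simp add: cut_ge)

lemma blockavg_eq: "i \<in> blk ns s \<Longrightarrow> blockavg ns z i = sum z (blk ns s) / card (blk ns s)"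
proof -
  assume i: "i \<in> blk ns s"
  then have "s < length ns"
    using blk_empty by (metis empty_iff not_le)
  moreover have "blockavg ns z i
      = (\<Sum>t<length ns. if t = s then sum z (blk ns s) / card (blk ns s) else 0)"
    unfolding blockavg_def using i blk_unique by (intro sum.cong) auto
  ultimately show ?thesis by simp
qed

lemma blockavg_outside: "sum_list ns \<le> i \<Longrightarrow> blockavg ns z i = 0"
  unfolding blockavg_def using blk_subset by (intro sum.neutral) fastforce

lemma blockavg_same_blk: "same_blk ns i j \<Longrightarrow> blockavg ns z i = blockavg ns z j"
  unfolding same_blk_def by (auto simp: blockavg_eq)

lemma sum_blockavg_blk: "(\<Sum>i\<in>blk ns s. blockavg ns z i) = sum z (blk ns s)"
  by (cases "card (blk ns s) = 0") (auto simp: blockavg_eq blk_def)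

lemma sum_blockavg_cut: "(\<Sum>i<cut ns k. blockavg ns z i) = (\<Sum>i<cut ns k. z i)"
  by (simp add: sum_lessThan_cut sum_blockavg_blk)

lemma sum_blockavg: "(\<Sum>i<sum_list ns. blockavg ns z i) = (\<Sum>i<sum_list ns. z i)"
  by (simp add: sum_lessThan_sum_list sum_blockavg_blk)

lemma blockavg_add_scaled:
  "blockavg ns (\<lambda>i. z i + t * v i) k = blockavg ns z k + t * blockavg ns v k"
proof -
  have "blockavg ns (\<lambda>i. z i + t * v i) k
      = (\<Sum>s<length ns. (if k \<in> blk ns s then sum z (blk ns s) / card (blk ns s) else 0)
          + t * (if k \<in> blk ns s then sum v (blk ns s) / card (blk ns s) else 0))"
    unfolding blockavg_def
    by (rule sum.cong[OF refl]) (simp add: sum.distrib sum_distrib_left[symmetric] add_divide_distrib)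
  then show ?thesis by (simp add: blockavg_def sum.distrib sum_distrib_left)
qed

section \<open>The coordinate $z = x + y$\<close>

definition block_decreasing :: "nat list \<Rightarrow> (nat \<Rightarrow> real) \<Rightarrow> bool" where
  "block_decreasing ns z \<longleftrightarrow> (\<forall>i j. i < j \<and> same_blk ns i j \<longrightarrow> z j \<le> z i)"

definition partial_sums_ge :: "nat list \<Rightarrow> real \<Rightarrow> (nat \<Rightarrow> real) \<Rightarrow> bool" where
  "partial_sums_ge ns C z \<longleftrightarrow> (\<forall>k. 1 \<le> k \<and> k < length ns \<longrightarrow> C \<le> (\<Sum>i<cut ns k. z i))"

definition densZ :: "nat list \<Rightarrow> (nat \<Rightarrow> real) \<Rightarrow> real" where
  "densZ ns z = (\<Prod>i<sum_list ns. \<Prod>j\<in>{i<..<sum_list ns}.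
      if same_blk ns i j then sinh (z i - z j) else exp (blockavg ns z i - blockavg ns z j))"

lemma decompA_fst_in_aM: "z \<in> afrak (sum_list ns) \<Longrightarrow> fst (decompA ns z) \<in> aM ns"
  by (auto simp: decompA_def aM_def afrak_def blockavg_outside sum_subtractf sum_blockavg
      sum_blockavg_blk)

lemma decompA_snd_in_aI: "z \<in> afrak (sum_list ns) \<Longrightarrow> snd (decompA ns z) \<in> aI ns"
  using sum_blockavg[of ns z]
  by (auto simp: decompA_def aI_def afrak_def blockavg_outside blockavg_same_blk)

lemma decompA_sum: "(\<lambda>i. fst (decompA ns z) i + snd (decompA ns z) i) = z"
  by (simp add: decompA_def)

lemma decompA_in_aplusM_times_aI_iff:
  assumes z: "z \<in> afrak (sum_list ns)"
  shows "decompA ns z \<in> aplusM ns \<times> aI ns \<longleftrightarrow> block_decreasing ns z"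
proof -
  have "z j - blockavg ns z j \<le> z i - blockavg ns z i \<longleftrightarrow> z j \<le> z i" if "same_blk ns i j" for i j
    using blockavg_same_blk[OF that, of z] by simp
  then show ?thesis
    using decompA_fst_in_aM[OF z] decompA_snd_in_aI[OF z]
    by (auto simp: aplusM_def block_decreasing_def decompA_def)
qed

lemma decompA_in_Ba_iff:
  "z \<in> afrak (sum_list ns) \<Longrightarrow>
    decompA ns z \<in> Ba ns R \<longleftrightarrow> block_decreasing ns z \<and> anorm (sum_list ns) z \<le> R"
  using decompA_in_aplusM_times_aI_iff[of z ns] decompA_sum[of ns z]
  by (cases "decompA ns z") (auto simp: Ba_def)

lemma decompA_in_Bplus_iff:
  "z \<in> afrak (sum_list ns) \<Longrightarrow> decompA ns z \<in> Bplus ns R \<longleftrightarrow>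
    block_decreasing ns z \<and> anorm (sum_list ns) z \<le> R \<and> partial_sums_ge ns 0 z"
  using decompA_in_Ba_iff[of z ns R] decompA_in_aplusM_times_aI_iff[of z ns]
    decompA_snd_in_aI[of z ns] sum_blockavg_cut[of ns z]
  by (auto simp: Bplus_def aplusI_def decompA_def partial_sums_ge_def)

lemma decompA_in_BCplus_iff:
  "z \<in> afrak (sum_list ns) \<Longrightarrow> C \<le> 0 \<Longrightarrow> decompA ns z \<in> BCplus ns C R \<longleftrightarrow>
    block_decreasing ns z \<and> anorm (sum_list ns) z \<le> R \<and> partial_sums_ge ns C z"
  using decompA_in_Ba_iff[of z ns R] decompA_sum[of ns z]
  by (cases "decompA ns z")
    (auto simp: BCplus_def coneC_def block_decreasing_def partial_sums_ge_def max_def)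

lemma densA_decompA: "densA ns (fst (decompA ns z)) (snd (decompA ns z)) = densZ ns z"
  unfolding densA_def densZ_def decompA_def fst_conv snd_conv
  by (intro prod.cong refl) (auto simp: blockavg_same_blk sinh_def)

section \<open>The density and the weight $2\rho$\<close>

definition two_rho :: "nat \<Rightarrow> nat \<Rightarrow> real" where
  "two_rho N i = (if i < N then real N - 1 - 2 * real i else 0)"

definition pair_gap :: "nat list \<Rightarrow> (nat \<Rightarrow> real) \<Rightarrow> nat \<Rightarrow> nat \<Rightarrow> real" where
  "pair_gap ns z i j = (if same_blk ns i j then z i - z j else blockavg ns z i - blockavg ns z j)"

lemma sum_pairs_diff:
  "(\<Sum>i<M. \<Sum>j\<in>{i<..<M}. z i - z j) = (\<Sum>i<M. (real M - 1 - 2 * real i) * (z i :: real))"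
proof (induction M)
  case (Suc M)
  have "{i<..<Suc M} = (if i < M then insert M {i<..<M} else {})" if "i < Suc M" for i
    using that by auto
  then have "(\<Sum>i<Suc M. \<Sum>j\<in>{i<..<Suc M}. z i - z j)
      = (\<Sum>i<M. (\<Sum>j\<in>{i<..<M}. z i - z j) + (z i - z M))"
    by (simp add: add.commute)
  also have "\<dots> = (\<Sum>i<M. \<Sum>j\<in>{i<..<M}. z i - z j) + (\<Sum>i<M. z i) - real M * z M"
    by (simp add: sum.distrib sum_subtractf)
  also have "\<dots> = (\<Sum>i<M. (real M - 1 - 2 * real i) * z i) + (\<Sum>i<M. z i) - real M * z M"
    by (simp only: Suc.IH)
  finally show ?case
    by (simp add: sum.distrib[symmetric] algebra_simps)
qed simp

lemma sum_product_diff: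
  "(\<Sum>i\<in>A. \<Sum>j\<in>B. x i - x j) = real (card B) * sum x A - real (card A) * (sum x B :: real)"
  by (simp add: sum_subtractf sum_distrib_left)

lemma sum_cross_block_pairs_eq_0:
  assumes x: "\<And>s. sum x (blk ns s) = 0"
  shows "(\<Sum>i<sum_list ns. \<Sum>j\<in>{i<..<sum_list ns}.
           if same_blk ns i j then 0 else x i - x j) = (0::real)"
proof -
  let ?N = "sum_list ns" and ?k = "length ns"
  let ?h = "\<lambda>i j. if i < j \<and> \<not> same_blk ns i j then x i - x j else 0"
  have "(\<Sum>j\<in>{i<..<?N}. if same_blk ns i j then 0 else x i - x j) = (\<Sum>j<?N. ?h i j)" for i
  proof -
    have "{i<..<?N} = {j \<in> {..<?N}. i < j}" by auto
    then have "(\<Sum>j\<in>{i<..<?N}. if same_blk ns i j then 0 else x i - x j)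
        = (\<Sum>j<?N. if i < j then (if same_blk ns i j then 0 else x i - x j) else 0)"
      by (simp only: sum.inter_filter finite_lessThan)
    also have "\<dots> = (\<Sum>j<?N. ?h i j)"
      by (rule sum.cong) auto
    finally show ?thesis .
  qed
  then have "(\<Sum>i<?N. \<Sum>j\<in>{i<..<?N}. if same_blk ns i j then 0 else x i - x j)
      = (\<Sum>s<?k. \<Sum>i\<in>blk ns s. \<Sum>t<?k. \<Sum>j\<in>blk ns t. ?h i j)"
    by (simp add: sum_lessThan_sum_list[symmetric])
  also have "\<dots> = (\<Sum>s<?k. \<Sum>i\<in>blk ns s. \<Sum>t<?k. \<Sum>j\<in>blk ns t. if s < t then x i - x j else 0)"
  proof (intro sum.cong refl)
    fix s i t j assume "i \<in> blk ns s" "j \<in> blk ns t"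
    then have "(i < j \<and> \<not> same_blk ns i j) \<longleftrightarrow> s < t"
      using blk_less[of i ns s j t] blk_less[of j ns t i s] same_blk_iff[of i ns s j t]
      by (metis less_irrefl nat_neq_iff order.strict_trans)
    then show "?h i j = (if s < t then x i - x j else 0)" by simp
  qed
  also have "\<dots> = (\<Sum>s<?k. \<Sum>t<?k. \<Sum>i\<in>blk ns s. \<Sum>j\<in>blk ns t. if s < t then x i - x j else 0)"
    by (rule sum.cong[OF refl], rule sum.swap)
  also have "\<dots> = (\<Sum>s<?k. \<Sum>t<?k. if s < t then \<Sum>i\<in>blk ns s. \<Sum>j\<in>blk ns t. x i - x j else 0)"
    by (intro sum.cong refl) simp
  also have "\<dots> = 0"
    by (simp add: sum_product_diff x cong: if_cong)
  finally show ?thesis .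
qed

lemma sum_pair_gap:
  "(\<Sum>i<sum_list ns. \<Sum>j\<in>{i<..<sum_list ns}. pair_gap ns z i j)
    = (\<Sum>i<sum_list ns. two_rho (sum_list ns) i * z i)"
proof -
  let ?N = "sum_list ns"
  let ?x = "\<lambda>i. z i - blockavg ns z i"
  have x: "sum ?x (blk ns s) = 0" for s
    by (simp add: sum_subtractf sum_blockavg_blk)
  have "(\<Sum>i<?N. \<Sum>j\<in>{i<..<?N}. pair_gap ns z i j)
      = (\<Sum>i<?N. \<Sum>j\<in>{i<..<?N}. z i - z j)
        - (\<Sum>i<?N. \<Sum>j\<in>{i<..<?N}. if same_blk ns i j then 0 else ?x i - ?x j)"
    unfolding pair_gap_def sum_subtractf[symmetric] by (intro sum.cong refl) auto
  also have "\<dots> = (\<Sum>i<?N. two_rho ?N i * z i)"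
    by (simp add: sum_cross_block_pairs_eq_0[OF x] sum_pairs_diff two_rho_def)
  finally show ?thesis .
qed

lemma sinh_le_exp: "sinh x \<le> exp (x::real)"
proof -
  have "- exp (- x) \<le> exp x"
    using exp_gt_zero[of "-x"] exp_gt_zero[of x] by linarith
  then show ?thesis by (simp add: sinh_def)
qed

lemma exp_mult_sinh_le: "0 \<le> e \<Longrightarrow> exp e * sinh x \<le> sinh (x + e :: real)"
  by (simp add: sinh_def exp_add[symmetric] algebra_simps)

lemma densZ_nonneg: "block_decreasing ns z \<Longrightarrow> 0 \<le> densZ ns z"
  unfolding densZ_def block_decreasing_def by (intro prod_nonneg) auto

lemma densZ_pos: "(\<And>i j. i < j \<Longrightarrow> same_blk ns i j \<Longrightarrow> z j < z i) \<Longrightarrow> 0 < densZ ns z"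
  unfolding densZ_def by (intro prod_pos) auto

lemma densZ_le_exp_two_rho:
  assumes "block_decreasing ns z"
  shows "densZ ns z \<le> exp (\<Sum>i<sum_list ns. two_rho (sum_list ns) i * z i)"
proof -
  let ?N = "sum_list ns"
  have "densZ ns z \<le> (\<Prod>i<?N. \<Prod>j\<in>{i<..<?N}. exp (pair_gap ns z i j))"
    unfolding densZ_def pair_gap_def
    using assms sinh_le_exp by (intro prod_mono conjI prod_nonneg) (auto simp: block_decreasing_def)
  also have "\<dots> = exp (\<Sum>i<?N. two_rho ?N i * z i)"
    by (simp add: sum_pair_gap[symmetric] exp_sum)
  finally show ?thesis .
qed

text \<open>Factorwise: $e^e \sinh d \le \sinh(d + e)$ for $e \ge 0$, and the off-block factors
  are exponentials of a linear function of $z$.\<close>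

lemma exp_two_rho_mult_densZ_le:
  assumes z: "block_decreasing ns z" and v: "block_decreasing ns v" and t: "0 \<le> t"
  shows "exp (t * (\<Sum>i<sum_list ns. two_rho (sum_list ns) i * v i)) * densZ ns z
    \<le> densZ ns (\<lambda>i. z i + t * v i)"
proof -
  let ?N = "sum_list ns"
  let ?f = "\<lambda>z i j. if same_blk ns i j then sinh (z i - z j)
                    else exp (blockavg ns z i - blockavg ns z j)"
  have factor: "0 \<le> exp (t * pair_gap ns v i j) * ?f z i j
      \<and> exp (t * pair_gap ns v i j) * ?f z i j \<le> ?f (\<lambda>i. z i + t * v i) i j" if "i < j" for i j
  proof (cases "same_blk ns i j")
    case True
    then have "z j \<le> z i" "v j \<le> v i"
      using z v that by (auto simp: block_decreasing_def)
    moreover have "exp (t * (v i - v j)) * sinh (z i - z j) \<le> sinh (z i - z j + t * (v i - v j))"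
      using \<open>v j \<le> v i\<close> t by (intro exp_mult_sinh_le) simp
    ultimately show ?thesis
      using True by (simp add: pair_gap_def algebra_simps)
  next
    case False
    then show ?thesis
      by (simp add: pair_gap_def blockavg_add_scaled exp_add[symmetric] algebra_simps)
  qed
  have "exp (t * (\<Sum>i<?N. two_rho ?N i * v i)) * densZ ns z
      = (\<Prod>i<?N. \<Prod>j\<in>{i<..<?N}. exp (t * pair_gap ns v i j) * ?f z i j)"
    by (simp add: sum_pair_gap[symmetric] densZ_def exp_sum sum_distrib_left prod.distrib)
  also have "\<dots> \<le> densZ ns (\<lambda>i. z i + t * v i)"
    unfolding densZ_def using factor by (intro prod_mono conjI prod_nonneg) auto
  finally show ?thesis .
qed

definition rho_norm :: "nat \<Rightarrow> real" where
  "rho_norm N = anorm N (two_rho N)"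

lemma anorm_eq_L2_set: "anorm N z = L2_set z {..<N}"
  by (simp add: anorm_def L2_set_def)

lemma abs_le_anorm: "i < N \<Longrightarrow> \<bar>z i\<bar> \<le> anorm N z"
  using member_le_L2_set[of "{..<N}" i "\<lambda>i. \<bar>z i\<bar>"] by (simp add: anorm_eq_L2_set L2_set_def)

lemma sum_mult_le_anorm: "(\<Sum>i<N. u i * z i) \<le> anorm N u * anorm N z"
proof -
  have "(\<Sum>i<N. u i * z i) \<le> (\<Sum>i<N. \<bar>u i\<bar> * \<bar>z i\<bar>)"
    by (intro sum_mono) (simp add: abs_mult[symmetric])
  also have "\<dots> \<le> anorm N u * anorm N z"
    unfolding anorm_eq_L2_set by (rule L2_set_mult_ineq)
  finally show ?thesis .
qed

lemma sum_two_rho: "m \<le> N \<Longrightarrow> (\<Sum>i<m. two_rho N i) = real m * (real N - real m)"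
  by (induction m) (simp_all add: two_rho_def algebra_simps)

lemma two_rho_in_afrak: "two_rho N \<in> afrak N"
  using sum_two_rho[of N N] by (simp add: afrak_def two_rho_def)

lemma two_rho_gap: "i < j \<Longrightarrow> j < N \<Longrightarrow> two_rho N j + 2 \<le> two_rho N i"
  by (simp add: two_rho_def)

lemma block_decreasing_two_rho: "block_decreasing ns (two_rho (sum_list ns))"
  unfolding block_decreasing_def using same_blk_less two_rho_gap by (smt (verit))

lemma rho_norm_nonneg: "0 \<le> rho_norm N"
  by (simp add: rho_norm_def anorm_eq_L2_set)

lemma rho_norm_sq: "(rho_norm N)\<^sup>2 = (\<Sum>i<N. (two_rho N i)\<^sup>2)"
proof -
  have "0 \<le> (\<Sum>i<N. (two_rho N i)\<^sup>2)"
    by (intro sum_nonneg) simp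
  then show ?thesis by (simp add: rho_norm_def anorm_def)
qed

lemma one_le_rho_norm_sq: "2 \<le> N \<Longrightarrow> 1 \<le> (rho_norm N)\<^sup>2"
proof -
  assume N: "2 \<le> N"
  then have "1 \<le> two_rho N 0"
    by (simp add: two_rho_def)
  then have "1 \<le> (two_rho N 0)\<^sup>2"
    by (rule one_le_power)
  also have "\<dots> \<le> (\<Sum>i<N. (two_rho N i)\<^sup>2)"
    using N by (intro member_le_sum) auto
  finally show ?thesis by (simp add: rho_norm_sq)
qed

lemma rho_norm_pos: "2 \<le> N \<Longrightarrow> 0 < rho_norm N"
  using one_le_rho_norm_sq[of N] rho_norm_nonneg[of N] by (cases "rho_norm N = 0") auto

lemma two_rho_dot_le: "(\<Sum>i<N. two_rho N i * z i) \<le> rho_norm N * anorm N z"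
  unfolding rho_norm_def by (rule sum_mult_le_anorm)

text \<open>Write $2\rho = u + c\,\mathbf{1}_{[0,m)}$ with $c = N - m$: the second part pairs
  negatively with $z$, and $|u|^2 = |2\rho|^2 - m c^2 \le |2\rho|^2 - 1$.\<close>

lemma two_rho_dot_le_of_neg_partial_sum:
  assumes z: "z \<in> afrak N" and m: "m \<le> N" and neg: "(\<Sum>i<m. z i) < 0"
  shows "(\<Sum>i<N. two_rho N i * z i) \<le> sqrt ((rho_norm N)\<^sup>2 - 1) * anorm N z"
proof -
  have "m \<noteq> N"
    using z neg by (auto simp: afrak_def)
  moreover have "m \<noteq> 0"
    using neg by (cases "m = 0") auto
  ultimately have m_less: "m < N" and m_pos: "1 \<le> m"
    using m by auto
  define c where "c = real N - real m"
  define u where "u i = two_rho N i - (if i < m then c else 0)" for i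
  have restrict: "(\<Sum>i<N. if i < m then f i else 0) = (\<Sum>i<m. f i)" for f :: "nat \<Rightarrow> real"
    using m by (simp add: sum.inter_filter[symmetric] lessThan_def) (metis order.strict_trans2)
  have "(\<Sum>i<N. two_rho N i * z i) = (\<Sum>i<N. u i * z i + (if i < m then c * z i else 0))"
    by (intro sum.cong refl) (simp add: u_def algebra_simps)
  also have "\<dots> = (\<Sum>i<N. u i * z i) + c * (\<Sum>i<m. z i)"
    by (simp add: sum.distrib restrict sum_distrib_left)
  also have "\<dots> \<le> (\<Sum>i<N. u i * z i)"
    using neg m by (simp add: c_def mult_nonneg_nonpos)
  also have "\<dots> \<le> anorm N u * anorm N z"
    by (rule sum_mult_le_anorm)
  also have "anorm N u \<le> sqrt ((rho_norm N)\<^sup>2 - 1)"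
  proof -
    have "1 \<le> c" using m_less by (simp add: c_def)
    then have c_bound: "1 \<le> real m * c\<^sup>2"
      using m_pos by (metis mult_mono' mult_1 one_le_power zero_le_one of_nat_1 of_nat_mono)
    have "(\<Sum>i<N. (u i)\<^sup>2)
        = (\<Sum>i<N. (two_rho N i)\<^sup>2 + (if i < m then c\<^sup>2 - 2 * c * two_rho N i else 0))"
      by (intro sum.cong refl) (simp add: u_def power2_eq_square algebra_simps)
    also have "\<dots> = (rho_norm N)\<^sup>2 + (real m * c\<^sup>2 - 2 * c * (\<Sum>i<m. two_rho N i))"
      by (simp add: rho_norm_sq sum.distrib restrict sum_subtractf sum_distrib_left)
    also have "\<dots> = (rho_norm N)\<^sup>2 - real m * c\<^sup>2"
      unfolding sum_two_rho[OF m] by (simp add: c_def power2_eq_square algebra_simps)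
    finally show ?thesis
      using c_bound unfolding anorm_def by (intro real_sqrt_le_mono) linarith
  qed
  then have "anorm N u * anorm N z \<le> sqrt ((rho_norm N)\<^sup>2 - 1) * anorm N z"
    by (rule mult_right_mono) (simp add: anorm_eq_L2_set)
  finally show ?thesis .
qed

section \<open>Pulling $\mu_A$ back to Lebesgue measure on $\mathbb{R}^{N-1}$\<close>

text \<open>The density of $\mu_A$ pulled back along $w \mapsto$ \<^const>\<open>decompA\<close> (\<^const>\<open>embedA\<close> $w$);
  the factor $\sqrt N$ is the density of \<^const>\<open>lebA\<close>.\<close>

definition muA_integrand ::
    "nat list \<Rightarrow> ((nat \<Rightarrow> real) \<times> (nat \<Rightarrow> real)) set \<Rightarrow> (nat \<Rightarrow> real) \<Rightarrow> ennreal" where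
  "muA_integrand ns S w = ennreal (sqrt (sum_list ns)) *
     (indicator (aplusM ns \<times> aI ns) (decompA ns (embedA (sum_list ns) w)) *
      ennreal (densA ns (fst (decompA ns (embedA (sum_list ns) w)))
                        (snd (decompA ns (embedA (sum_list ns) w)))))
     * indicator S (decompA ns (embedA (sum_list ns) w))"

lemma emeasure_muA_eq_nn_integral:
  assumes S: "S \<in> sets (borel_seq \<Otimes>\<^sub>M borel_seq)"
  shows "emeasure (muA ns) S = (\<integral>\<^sup>+ w. muA_integrand ns S w \<partial>lborel_coords (sum_list ns))"
proof -
  let ?N = "sum_list ns"
  let ?f = "\<lambda>p. indicator (aplusM ns \<times> aI ns) p * ennreal (densA ns (fst p) (snd p))"
  have f: "?f \<in> borel_measurable (borel_seq \<Otimes>\<^sub>M borel_seq)"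
    using sets_aplusM_times_aI[of ns] borel_measurable_densA[of ns] by measurable
  then have fS: "(\<lambda>p. ?f p * indicator S p) \<in> borel_measurable (borel_seq \<Otimes>\<^sub>M borel_seq)"
    using S by measurable
  have "emeasure (muA ns) S = (\<integral>\<^sup>+ p. ?f p * indicator S p \<partial>lebAMI ns)"
    unfolding muA_def using S f
    by (subst emeasure_density) (auto cong: measurable_cong_sets)
  also have "\<dots> = (\<integral>\<^sup>+ z. ?f (decompA ns z) * indicator S (decompA ns z) \<partial>lebA ?N)"
    unfolding lebAMI_def using fS measurable_decompA[of ns]
    by (subst nn_integral_distr) (auto simp: lebA_def cong: measurable_cong_sets)
  also have "\<dots> = (\<integral>\<^sup>+ z. ennreal (sqrt ?N) * (?f (decompA ns z) * indicator S (decompA ns z))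
                      \<partial>distr (lborel_coords ?N) borel_seq (embedA ?N))"
    unfolding lebA_def using fS measurable_decompA[of ns]
    by (subst nn_integral_density) (auto cong: measurable_cong_sets)
  also have "\<dots> = (\<integral>\<^sup>+ w. muA_integrand ns S w \<partial>lborel_coords ?N)"
    unfolding muA_integrand_def using fS measurable_decompA[of ns] measurable_embedA[of ?N]
    by (subst nn_integral_distr) (auto simp: mult.assoc)
  finally show ?thesis .
qed

lemma borel_measurable_muA_integrand:
  assumes S: "S \<in> sets (borel_seq \<Otimes>\<^sub>M borel_seq)"
  shows "muA_integrand ns S \<in> borel_measurable (lborel_coords (sum_list ns))"
proof -
  let ?f = "\<lambda>p. ennreal (sqrt (sum_list ns)) *
              (indicator (aplusM ns \<times> aI ns) p * ennreal (densA ns (fst p) (snd p))) * indicator S p"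
  have "?f \<in> borel_measurable (borel_seq \<Otimes>\<^sub>M borel_seq)"
    using sets_aplusM_times_aI[of ns] borel_measurable_densA[of ns] S by measurable
  then have "(\<lambda>w. ?f (decompA ns (embedA (sum_list ns) w))) \<in> borel_measurable (lborel_coords (sum_list ns))"
    using measurable_decompA[of ns] measurable_embedA[of "sum_list ns"] by measurable
  then show ?thesis unfolding muA_integrand_def .
qed

lemma embedA_in_afrak: "1 \<le> N \<Longrightarrow> embedA N w \<in> afrak N"
proof -
  assume "1 \<le> N"
  then obtain n where n: "N = Suc n" by (cases N) auto
  then have "(\<Sum>i<N. embedA N w i) = (\<Sum>i<n. embedA N w i) + embedA N w n"
    by simp
  also have "\<dots> = 0" by (simp add: embedA_def n)
  finally show ?thesis by (auto simp: afrak_def embedA_def)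
qed

lemma embedA_translate:
  assumes N: "1 \<le> N" and v: "v \<in> afrak N"
  shows "embedA N (\<lambda>i\<in>{..<N - 1}. w i + v i) = (\<lambda>i. embedA N w i + v i)"
proof -
  obtain n where n: "N = Suc n" using N by (cases N) auto
  have "v n = - (\<Sum>i<n. v i)" and "\<And>i. N \<le> i \<Longrightarrow> v i = 0"
    using v by (auto simp: afrak_def n)
  then show ?thesis by (auto simp: embedA_def n sum.distrib)
qed

lemma muA_integrand_eq:
  assumes N: "1 \<le> sum_list ns"
    and S: "\<And>z. z \<in> afrak (sum_list ns) \<Longrightarrow> decompA ns z \<in> S \<longleftrightarrow> P z"
    and P: "\<And>z. z \<in> afrak (sum_list ns) \<Longrightarrow> P z \<Longrightarrow> block_decreasing ns z"
  shows "muA_integrand ns S w = (if P (embedA (sum_list ns) w)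
     then ennreal (sqrt (sum_list ns) * densZ ns (embedA (sum_list ns) w)) else 0)"
proof -
  let ?z = "embedA (sum_list ns) w"
  have z: "?z \<in> afrak (sum_list ns)"
    by (rule embedA_in_afrak[OF N])
  show ?thesis
  proof (cases "P ?z")
    case True
    then show ?thesis
      using P[OF z True] S[OF z] decompA_in_aplusM_times_aI_iff[OF z] densZ_nonneg[of ns ?z]
      by (simp add: muA_integrand_def densA_decompA ennreal_mult)
  next
    case False
    then show ?thesis using S[OF z] by (simp add: muA_integrand_def)
  qed
qed

lemma muA_integrand_Bplus:
  "1 \<le> sum_list ns \<Longrightarrow> muA_integrand ns (Bplus ns R) w =
    (if block_decreasing ns (embedA (sum_list ns) w) \<and> anorm (sum_list ns) (embedA (sum_list ns) w) \<le> R
        \<and> partial_sums_ge ns 0 (embedA (sum_list ns) w)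
     then ennreal (sqrt (sum_list ns) * densZ ns (embedA (sum_list ns) w)) else 0)"
  by (rule muA_integrand_eq) (auto simp: decompA_in_Bplus_iff)

lemma emeasure_lborel_translate:
  assumes "A \<in> sets (lborel :: real measure)"
  shows "emeasure lborel ((\<lambda>x. x + c) -` A) = emeasure lborel A"
proof -
  have "emeasure lborel A = emeasure (distr lborel borel ((+) c)) A"
    by (simp add: lborel_distr_plus)
  also have "\<dots> = emeasure lborel ((+) c -` A \<inter> space lborel)"
    using assms by (subst emeasure_distr) auto
  also have "(+) c -` A \<inter> space lborel = (\<lambda>x. x + c) -` A"
    by (auto simp: add.commute)
  finally show ?thesis ..
qed

lemma distr_lborel_coords_translate:
  "distr (lborel_coords N) (lborel_coords N) (\<lambda>w. \<lambda>i\<in>{..<N - 1}. w i + a i) = lborel_coords N"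
proof -
  interpret product_sigma_finite "\<lambda>_. lborel :: real measure" by standard
  let ?I = "{..<N - 1}" and ?T = "\<lambda>w. \<lambda>i\<in>{..<N - 1}. w i + a i"
  have coord: "(\<lambda>w. w i) \<in> borel_measurable (lborel_coords N)" if "i \<in> ?I" for i
    using that measurable_component_singleton[of i ?I "\<lambda>_. lborel"] by simp
  then have T: "?T \<in> measurable (lborel_coords N) (lborel_coords N)"
    by (intro measurable_restrict) simp
  show ?thesis
  proof (rule PiM_eqI)
    fix A assume A: "\<And>i. i \<in> ?I \<Longrightarrow> A i \<in> sets (lborel :: real measure)"
    have shifted: "(\<lambda>x. x + a i) -` A i \<in> sets lborel" if "i \<in> ?I" for i
      using A[OF that] measurable_sets[of "\<lambda>x. x + a i" lborel lborel "A i"] by simp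
    have "?T -` Pi\<^sub>E ?I A \<inter> space (lborel_coords N) = Pi\<^sub>E ?I (\<lambda>i. (\<lambda>x. x + a i) -` A i)"
      by (auto simp: space_PiM PiE_def Pi_def extensional_def)
    then have "emeasure (distr (lborel_coords N) (lborel_coords N) ?T) (Pi\<^sub>E ?I A)
        = emeasure (lborel_coords N) (Pi\<^sub>E ?I (\<lambda>i. (\<lambda>x. x + a i) -` A i))"
      using T A by (simp add: emeasure_distr sets_PiM_I_finite)
    also have "\<dots> = (\<Prod>i\<in>?I. emeasure lborel ((\<lambda>x. x + a i) -` A i))"
      using shifted by (subst emeasure_PiM) auto
    also have "\<dots> = (\<Prod>i\<in>?I. emeasure lborel (A i))"
      using A by (intro prod.cong refl) (simp add: emeasure_lborel_translate)
    finally show "emeasure (distr (lborel_coords N) (lborel_coords N) ?T) (Pi\<^sub>E ?I A)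
        = (\<Prod>i\<in>?I. emeasure lborel (A i))" .
  qed simp_all
qed

lemma nn_integral_lborel_coords_translate:
  assumes g: "g \<in> borel_measurable (lborel_coords N)"
  shows "(\<integral>\<^sup>+ w. g w \<partial>lborel_coords N) = (\<integral>\<^sup>+ w. g (\<lambda>i\<in>{..<N - 1}. w i + a i) \<partial>lborel_coords N)"
proof -
  have "(\<lambda>w. w i) \<in> borel_measurable (lborel_coords N)" if "i < N - 1" for i
    using that measurable_component_singleton[of i "{..<N - 1}" "\<lambda>_. lborel"] by simp
  then have "(\<lambda>w. \<lambda>i\<in>{..<N - 1}. w i + a i) \<in> measurable (lborel_coords N) (lborel_coords N)"
    by (intro measurable_restrict) simp
  then show ?thesis
    using g by (subst (1) distr_lborel_coords_translate[symmetric, of _ a]) (simp add: nn_integral_distr)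
qed

section \<open>Upper bounds\<close>

lemma emeasure_box:
  "0 \<le> R \<Longrightarrow> emeasure (lborel_coords N) (PiE {..<N - 1} (\<lambda>_. {-R..R})) = ennreal ((2 * R) ^ (N - 1))"
proof -
  interpret product_sigma_finite "\<lambda>_. lborel :: real measure" by standard
  assume "0 \<le> R"
  then show ?thesis by (subst emeasure_PiM) (auto simp: ennreal_power prod_constant)
qed

lemma in_box_if_anorm_le:
  assumes "w \<in> space (lborel_coords N)" and "anorm N (embedA N w) \<le> R"
  shows "w \<in> PiE {..<N - 1} (\<lambda>_. {-R..R})"
proof -
  have bound: "\<bar>w i\<bar> \<le> R" if "i < N - 1" for i
  proof -
    have "\<bar>embedA N w i\<bar> \<le> anorm N (embedA N w)"
      using that by (intro abs_le_anorm) simp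
    then show ?thesis using that assms(2) by (simp add: embedA_def)
  qed
  then have "w i \<in> {-R..R}" if "i < N - 1" for i
    using bound[OF that] by (auto simp: abs_le_iff)
  then show ?thesis
    using assms(1) by (auto simp: space_PiM PiE_def)
qed

text \<open>Such a set lies in the box $[-R,R]^{N-1}$, on which the density is at most $e^{aR}$.\<close>

lemma emeasure_muA_le_exp:
  assumes N: "1 \<le> sum_list ns" and R: "0 \<le> R" and a: "0 \<le> a"
    and S: "S \<in> sets (borel_seq \<Otimes>\<^sub>M borel_seq)"
    and S_iff: "\<And>z. z \<in> afrak (sum_list ns) \<Longrightarrow> decompA ns z \<in> S \<longleftrightarrow> P z"
    and P: "\<And>z. z \<in> afrak (sum_list ns) \<Longrightarrow> P z \<Longrightarrow> block_decreasing ns z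
              \<and> anorm (sum_list ns) z \<le> R
              \<and> (\<Sum>i<sum_list ns. two_rho (sum_list ns) i * z i) \<le> a * anorm (sum_list ns) z"
  shows "emeasure (muA ns) S \<le> ennreal (sqrt (sum_list ns) * exp (a * R) * (2 * R) ^ (sum_list ns - 1))"
proof -
  let ?N = "sum_list ns"
  let ?B = "PiE {..<?N - 1} (\<lambda>_. {-R..R})"
  let ?c = "sqrt ?N * exp (a * R)"
  have integrand_eq: "muA_integrand ns S w
      = (if P (embedA ?N w) then ennreal (sqrt ?N * densZ ns (embedA ?N w)) else 0)" for w
  proof (rule muA_integrand_eq[OF N S_iff])
    fix z assume "z \<in> afrak ?N" "P z"
    then show "block_decreasing ns z" using P by blast
  qed
  have integrand: "muA_integrand ns S w \<le> ennreal ?c * indicator ?B w"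
    if w: "w \<in> space (lborel_coords ?N)" for w
  proof (cases "P (embedA ?N w)")
    case True
    let ?z = "embedA ?N w"
    have z: "?z \<in> afrak ?N"
      by (rule embedA_in_afrak[OF N])
    note Pz = P[OF z True]
    have "densZ ns ?z \<le> exp (\<Sum>i<?N. two_rho ?N i * ?z i)"
      using Pz by (intro densZ_le_exp_two_rho) simp
    also have "\<dots> \<le> exp (a * R)"
      using Pz mult_left_mono[of "anorm ?N ?z" R a] a by simp
    finally have "sqrt ?N * densZ ns ?z \<le> ?c"
      by (simp add: mult_left_mono)
    then show ?thesis
      using True Pz in_box_if_anorm_le[OF w, of R] by (simp add: integrand_eq ennreal_leI)
  next
    case False
    then show ?thesis by (simp add: integrand_eq)
  qed
  have "emeasure (muA ns) S = (\<integral>\<^sup>+ w. muA_integrand ns S w \<partial>lborel_coords ?N)"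
    by (rule emeasure_muA_eq_nn_integral[OF S])
  also have "\<dots> \<le> (\<integral>\<^sup>+ w. ennreal ?c * indicator ?B w \<partial>lborel_coords ?N)"
    by (intro nn_integral_mono integrand)
  also have "\<dots> = ennreal ?c * ennreal ((2 * R) ^ (?N - 1))"
    using emeasure_box[OF R, of ?N] by (simp add: nn_integral_cmult_indicator sets_PiM_I_finite)
  also have "\<dots> = ennreal (?c * (2 * R) ^ (?N - 1))"
    using R by (simp add: ennreal_mult)
  finally show ?thesis .
qed

lemma emeasure_Ba_le:
  "1 \<le> sum_list ns \<Longrightarrow> 0 \<le> R \<Longrightarrow> emeasure (muA ns) (Ba ns R)
    \<le> ennreal (sqrt (sum_list ns) * exp (rho_norm (sum_list ns) * R) * (2 * R) ^ (sum_list ns - 1))"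
  by (rule emeasure_muA_le_exp[OF _ _ rho_norm_nonneg sets_Ba decompA_in_Ba_iff])
    (auto simp: two_rho_dot_le)

lemma emeasure_BCplus_diff_le:
  assumes N: "2 \<le> sum_list ns" and R: "0 \<le> R" and C: "C \<le> 0"
  shows "emeasure (muA ns) (BCplus ns C R - Bplus ns R) \<le> ennreal (sqrt (sum_list ns)
    * exp (sqrt ((rho_norm (sum_list ns))\<^sup>2 - 1) * R) * (2 * R) ^ (sum_list ns - 1))"
proof (rule emeasure_muA_le_exp)
  show "z \<in> afrak (sum_list ns) \<Longrightarrow> decompA ns z \<in> BCplus ns C R - Bplus ns R \<longleftrightarrow>
      (block_decreasing ns z \<and> anorm (sum_list ns) z \<le> R \<and> partial_sums_ge ns C z)
      \<and> \<not> partial_sums_ge ns 0 z" for z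
    using C by (auto simp: decompA_in_Bplus_iff decompA_in_BCplus_iff)
  show "block_decreasing ns z \<and> anorm (sum_list ns) z \<le> R
      \<and> (\<Sum>i<sum_list ns. two_rho (sum_list ns) i * z i)
          \<le> sqrt ((rho_norm (sum_list ns))\<^sup>2 - 1) * anorm (sum_list ns) z"
    if z: "z \<in> afrak (sum_list ns)"
      and "(block_decreasing ns z \<and> anorm (sum_list ns) z \<le> R \<and> partial_sums_ge ns C z)
           \<and> \<not> partial_sums_ge ns 0 z" for z
  proof -
    from that obtain k where "(\<Sum>i<cut ns k. z i) < 0"
      unfolding partial_sums_ge_def by (auto simp: not_le)
    then show ?thesis
      using that z cut_le_sum_list two_rho_dot_le_of_neg_partial_sum by blast
  qed
qed (use N R one_le_rho_norm_sq[OF N] sets_BCplus sets_Bplus in auto)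

lemma emeasure_muA_finite:
  assumes "1 \<le> sum_list ns" "0 \<le> R" "S \<in> sets (borel_seq \<Otimes>\<^sub>M borel_seq)" "S \<subseteq> Ba ns R"
  shows "emeasure (muA ns) S \<noteq> top"
proof -
  have "emeasure (muA ns) S \<le> emeasure (muA ns) (Ba ns R)"
    using assms(4) sets_Ba by (intro emeasure_mono) auto
  also have "\<dots> < top"
    using emeasure_Ba_le[OF assms(1,2)] by (simp add: order.strict_trans1)
  finally show ?thesis by simp
qed
lemma emeasure_Bplus_finite: "1 \<le> sum_list ns \<Longrightarrow> 0 \<le> R \<Longrightarrow> emeasure (muA ns) (Bplus ns R) \<noteq> top"
  by (intro emeasure_muA_finite sets_Bplus) (auto simp: Bplus_def)

lemma emeasure_BCplus_finite: "1 \<le> sum_list ns \<Longrightarrow> 0 \<le> R \<Longrightarrow> emeasure (muA ns) (BCplus ns C R) \<noteq> top"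
  by (intro emeasure_muA_finite sets_BCplus) (auto simp: BCplus_def)

section \<open>Lower bounds\<close>

lemma block_decreasing_add_scaled:
  "block_decreasing ns z \<Longrightarrow> block_decreasing ns v \<Longrightarrow> 0 \<le> t \<Longrightarrow>
    block_decreasing ns (\<lambda>i. z i + t * v i)"
  unfolding block_decreasing_def by (smt (verit) mult_left_mono)

lemma anorm_add_scaled_le:
  "0 \<le> t \<Longrightarrow> anorm N (\<lambda>i. z i + t * v i) \<le> anorm N z + t * anorm N v"
  unfolding anorm_eq_L2_set
  using L2_set_triangle_ineq[of z "\<lambda>i. t * v i"] by (simp add: L2_set_right_distrib)

lemma partial_sums_ge_add_two_rho:
  assumes "partial_sums_ge ns 0 z" and "0 \<le> t"
  shows "partial_sums_ge ns 0 (\<lambda>i. z i + t * two_rho (sum_list ns) i)"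
  unfolding partial_sums_ge_def
proof (intro allI impI)
  fix k assume k: "1 \<le> k \<and> k < length ns"
  have "0 \<le> (\<Sum>i<cut ns k. two_rho (sum_list ns) i)"
    using cut_le_sum_list[of ns k] by (simp add: sum_two_rho)
  then show "0 \<le> (\<Sum>i<cut ns k. z i + t * two_rho (sum_list ns) i)"
    using assms k by (simp add: partial_sums_ge_def sum.distrib sum_distrib_left[symmetric])
qed

lemma muA_integrand_Bplus_translate:
  assumes N: "1 \<le> sum_list ns" and t: "0 \<le> t"
  defines "K \<equiv> rho_norm (sum_list ns)"
  shows "ennreal (exp (t * K\<^sup>2)) * muA_integrand ns (Bplus ns R) w
    \<le> muA_integrand ns (Bplus ns (R + t * K))
         (\<lambda>i\<in>{..<sum_list ns - 1}. w i + t * two_rho (sum_list ns) i)"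
proof -
  let ?N = "sum_list ns"
  let ?z = "embedA ?N w"
  let ?z' = "\<lambda>i. ?z i + t * two_rho ?N i"
  have "(\<lambda>i. t * two_rho ?N i) \<in> afrak ?N"
    using two_rho_in_afrak[of ?N] by (auto simp: afrak_def sum_distrib_left[symmetric])
  then have translate: "embedA ?N (\<lambda>i\<in>{..<?N - 1}. w i + t * two_rho ?N i) = ?z'"
    by (rule embedA_translate[OF N])
  show ?thesis
  proof (cases "block_decreasing ns ?z \<and> anorm ?N ?z \<le> R \<and> partial_sums_ge ns 0 ?z")
    case True
    have "anorm ?N ?z' \<le> anorm ?N ?z + t * K"
      using anorm_add_scaled_le[OF t, of ?N ?z] by (simp add: K_def rho_norm_def)
    moreover have "K\<^sup>2 = (\<Sum>i<?N. two_rho ?N i * two_rho ?N i)"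
      unfolding K_def rho_norm_sq by (simp add: power2_eq_square)
    then have "exp (t * K\<^sup>2) * densZ ns ?z \<le> densZ ns ?z'"
      using True by (simp add: exp_two_rho_mult_densZ_le block_decreasing_two_rho t)
    ultimately have "exp (t * K\<^sup>2) * (sqrt ?N * densZ ns ?z) \<le> sqrt ?N * densZ ns ?z'"
      and "block_decreasing ns ?z' \<and> anorm ?N ?z' \<le> R + t * K \<and> partial_sums_ge ns 0 ?z'"
      using True t block_decreasing_add_scaled[OF _ block_decreasing_two_rho t, of ns ?z]
        partial_sums_ge_add_two_rho[OF _ t, of ns ?z]
      by (auto simp: mult.left_commute mult_left_mono)
    then show ?thesis
      unfolding muA_integrand_Bplus[OF N] translate
      using True densZ_nonneg[of ns ?z] by (simp add: ennreal_mult[symmetric] ennreal_leI)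
  next
    case False
    then have "muA_integrand ns (Bplus ns R) w = 0"
      unfolding muA_integrand_Bplus[OF N] by (rule if_not_P)
    then show ?thesis by simp
  qed
qed

lemma emeasure_Bplus_growth:
  assumes N: "1 \<le> sum_list ns" and t: "0 \<le> t"
  defines "K \<equiv> rho_norm (sum_list ns)"
  shows "ennreal (exp (t * K\<^sup>2)) * emeasure (muA ns) (Bplus ns R) \<le> emeasure (muA ns) (Bplus ns (R + t * K))"
proof -
  let ?N = "sum_list ns"
  have "ennreal (exp (t * K\<^sup>2)) * emeasure (muA ns) (Bplus ns R)
      = (\<integral>\<^sup>+ w. ennreal (exp (t * K\<^sup>2)) * muA_integrand ns (Bplus ns R) w \<partial>lborel_coords ?N)"
    using borel_measurable_muA_integrand[OF sets_Bplus]
    by (simp add: emeasure_muA_eq_nn_integral sets_Bplus nn_integral_cmult)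
  also have "\<dots> \<le> (\<integral>\<^sup>+ w. muA_integrand ns (Bplus ns (R + t * K))
                     (\<lambda>i\<in>{..<?N - 1}. w i + t * two_rho ?N i) \<partial>lborel_coords ?N)"
    unfolding K_def by (intro nn_integral_mono muA_integrand_Bplus_translate N t)
  also have "\<dots> = (\<integral>\<^sup>+ w. muA_integrand ns (Bplus ns (R + t * K)) w \<partial>lborel_coords ?N)"
    by (rule nn_integral_lborel_coords_translate[symmetric])
      (rule borel_measurable_muA_integrand[OF sets_Bplus])
  also have "\<dots> = emeasure (muA ns) (Bplus ns (R + t * K))"
    by (rule emeasure_muA_eq_nn_integral[OF sets_Bplus, symmetric])
  finally show ?thesis .
qed

lemma measure_Bplus_growth:
  assumes N: "2 \<le> sum_list ns" and R0: "0 \<le> R0" "R0 \<le> R"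
  shows "exp ((R - R0) * rho_norm (sum_list ns)) * measure (muA ns) (Bplus ns R0)
    \<le> measure (muA ns) (Bplus ns R)"
proof -
  define K where "K = rho_norm (sum_list ns)"
  define t where "t = (R - R0) / K"
  have K: "0 < K"
    using rho_norm_pos[OF N] by (simp add: K_def)
  then have t: "0 \<le> t" and R: "R0 + t * K = R" and exp: "t * K\<^sup>2 = (R - R0) * K"
    using R0 by (simp_all add: t_def power2_eq_square)
  have "ennreal (exp ((R - R0) * K)) * emeasure (muA ns) (Bplus ns R0) \<le> emeasure (muA ns) (Bplus ns R)"
    using emeasure_Bplus_growth[OF _ t, of ns R0] N by (simp add: K_def[symmetric] R exp)
  moreover have "emeasure (muA ns) (Bplus ns S) = ennreal (measure (muA ns) (Bplus ns S))"
    if "0 \<le> S" for S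
    using N that by (intro emeasure_eq_ennreal_measure emeasure_Bplus_finite) simp_all
  ultimately show ?thesis
    using R0 by (simp add: K_def ennreal_mult[symmetric] ennreal_le_iff)
qed

lemma nn_integral_pos:
  assumes f: "f \<in> borel_measurable M" and B: "B \<in> sets M" "emeasure M B \<noteq> 0"
    and pos: "\<And>x. x \<in> B \<Longrightarrow> f x \<noteq> 0"
  shows "0 < (\<integral>\<^sup>+ x. f x \<partial>M)"
proof (rule ccontr)
  assume "\<not> 0 < (\<integral>\<^sup>+ x. f x \<partial>M)"
  then have "AE x in M. f x = 0"
    using nn_integral_0_iff_AE[OF f] by (simp add: not_gr_zero)
  then have "AE x in M. x \<notin> B"
    by eventually_elim (use pos in auto)
  then have "emeasure M B = 0"
    using AE_iff_measurable[OF B(1), of "\<lambda>x. x \<notin> B"] sets.sets_into_space[OF B(1)] by auto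
  with B(2) show False ..
qed

lemma embedA_near_two_rho:
  assumes N: "1 \<le> N" and w: "\<And>i. i < N - 1 \<Longrightarrow> two_rho N i \<le> w i \<and> w i \<le> two_rho N i + 1/2"
  shows "\<And>i. i < N - 1 \<Longrightarrow> two_rho N i \<le> embedA N w i"
    and "\<And>i. i < N \<Longrightarrow> embedA N w i \<le> two_rho N i + 1/2"
proof -
  show "two_rho N i \<le> embedA N w i" if "i < N - 1" for i
    using w[OF that] that by (simp add: embedA_def)
  have "(\<Sum>j<N - 1. two_rho N j) \<le> (\<Sum>j<N - 1. w j)"
    using w by (intro sum_mono) auto
  then have last: "embedA N w (N - 1) \<le> two_rho N (N - 1)"
    using N sum_two_rho[of "N - 1" N] by (simp add: embedA_def two_rho_def of_nat_diff)
  show "embedA N w i \<le> two_rho N i + 1/2" if "i < N" for i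
  proof (cases "i < N - 1")
    case True
    then show ?thesis using w[OF True] by (simp add: embedA_def)
  next
    case False
    then have "i = N - 1" using that by simp
    with last show ?thesis by simp
  qed
qed

context
  fixes N :: nat and z :: "nat \<Rightarrow> real"
  assumes lower: "\<And>i. i < N - 1 \<Longrightarrow> two_rho N i \<le> z i"
    and upper: "\<And>i. i < N \<Longrightarrow> z i \<le> two_rho N i + 1/2"
begin

lemma near_two_rho_strict_decreasing:
  assumes "i < j" "j < N"
  shows "z j < z i"
proof -
  have "i < N - 1" using assms by simp
  then show ?thesis
    using assms upper[of j] two_rho_gap[of i j N] lower[of i] by simp
qed

lemma near_two_rho_partial_sum_nonneg:
  assumes z: "z \<in> afrak N" and m: "m \<le> N"
  shows "0 \<le> (\<Sum>i<m. z i)"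
proof (cases "m = N")
  case True
  then show ?thesis using z by (simp add: afrak_def)
next
  case False
  then have "0 \<le> (\<Sum>i<m. two_rho N i)"
    using m by (simp add: sum_two_rho)
  also have "\<dots> \<le> (\<Sum>i<m. z i)"
    using False m lower by (intro sum_mono) simp
  finally show ?thesis .
qed

lemma near_two_rho_anorm_le:
  assumes z: "z \<in> afrak N" and N: "1 \<le> N"
  shows "anorm N z \<le> real N ^ 3"
proof -
  have small: "\<bar>z i\<bar> \<le> real N" if "i < N - 1" for i
  proof -
    have "i + 2 \<le> N" using that by simp
    then have "real i + 2 \<le> real N"
      by (metis of_nat_add of_nat_le_iff of_nat_numeral)
    then show ?thesis
      using lower[OF that] upper[of i] that by (simp add: two_rho_def abs_le_iff)
  qed
  have bound: "\<bar>z i\<bar> \<le> real N ^ 2" if "i < N" for i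
  proof (cases "i < N - 1")
    case True
    have "real N \<le> real N ^ 2"
      using N power_increasing[of 1 2 "real N"] by simp
    then show ?thesis
      using small[OF True] by linarith
  next
    case False
    then have i: "i = N - 1" using that by simp
    obtain n where n: "N = Suc n" using N by (cases N) auto
    then have "(\<Sum>j<N. z j) = (\<Sum>j<N - 1. z j) + z (N - 1)"
      by simp
    then have "z i = - (\<Sum>j<N - 1. z j)"
      using z i by (simp add: afrak_def eq_neg_iff_add_eq_0 add.commute)
    then have "\<bar>z i\<bar> = \<bar>\<Sum>j<N - 1. z j\<bar>"
      by simp
    also have "\<dots> \<le> (\<Sum>j<N - 1. \<bar>z j\<bar>)"
      by (rule sum_abs)
    also have "\<dots> \<le> real (N - 1) * real N"
      using sum_mono[of "{..<N - 1}" "\<lambda>j. \<bar>z j\<bar>" "\<lambda>_. real N"] small by simp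
    also have "\<dots> \<le> real N ^ 2"
      by (simp add: power2_eq_square mult_right_mono)
    finally show ?thesis .
  qed
  have "anorm N z \<le> (\<Sum>i<N. \<bar>z i\<bar>)"
    unfolding anorm_eq_L2_set by (rule L2_set_le_sum_abs)
  also have "\<dots> \<le> (\<Sum>i<N. real N ^ 2)"
    using bound by (intro sum_mono) simp
  also have "\<dots> = real N ^ 3"
    by (simp add: power2_eq_square power3_eq_cube)
  finally show ?thesis .
qed

end

text \<open>The integrand is positive on the box of side $1/2$ at $2\rho$, whose points are
  strictly decreasing with nonnegative partial sums.\<close>

lemma measure_Bplus_pos:
  assumes N2: "2 \<le> sum_list ns"
  shows "0 < measure (muA ns) (Bplus ns (real (sum_list ns) ^ 3))"
proof -
  let ?N = "sum_list ns"
  let ?B = "PiE {..<?N - 1} (\<lambda>i. {two_rho ?N i .. two_rho ?N i + 1/2})"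
  have N: "1 \<le> ?N" using N2 by simp
  have "emeasure (lborel_coords ?N) ?B = (\<Prod>i<?N - 1. emeasure lborel {two_rho ?N i .. two_rho ?N i + 1/2})"
  proof -
    interpret product_sigma_finite "\<lambda>_. lborel :: real measure" by standard
    show ?thesis by (subst emeasure_PiM) auto
  qed
  then have B: "emeasure (lborel_coords ?N) ?B \<noteq> 0"
    by (simp add: prod_constant)
  have "muA_integrand ns (Bplus ns (real ?N ^ 3)) w \<noteq> 0" if w: "w \<in> ?B" for w
  proof -
    let ?z = "embedA ?N w"
    have lower: "\<And>i. i < ?N - 1 \<Longrightarrow> two_rho ?N i \<le> ?z i"
      and upper: "\<And>i. i < ?N \<Longrightarrow> ?z i \<le> two_rho ?N i + 1/2"
      using embedA_near_two_rho[OF N, of w] w by (auto simp: PiE_def Pi_def)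
    have z: "?z \<in> afrak ?N" by (rule embedA_in_afrak[OF N])
    have strict: "i < j \<Longrightarrow> same_blk ns i j \<Longrightarrow> ?z j < ?z i" for i j
      using near_two_rho_strict_decreasing[OF lower upper] same_blk_less by blast
    then have "block_decreasing ns ?z" "0 < densZ ns ?z"
      by (auto simp: block_decreasing_def less_imp_le intro: densZ_pos)
    moreover have "partial_sums_ge ns 0 ?z"
      using near_two_rho_partial_sum_nonneg[OF lower upper z] cut_le_sum_list
      by (simp add: partial_sums_ge_def)
    moreover have "anorm ?N ?z \<le> real ?N ^ 3"
      by (rule near_two_rho_anorm_le[OF lower upper z N])
    ultimately show ?thesis
      using N by (simp add: muA_integrand_Bplus ennreal_eq_0_iff not_le)
  qed
  then have "0 < emeasure (muA ns) (Bplus ns (real ?N ^ 3))"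
    unfolding emeasure_muA_eq_nn_integral[OF sets_Bplus]
    using B by (intro nn_integral_pos borel_measurable_muA_integrand sets_Bplus) (auto intro: sets_PiM_I_finite)
  moreover have "emeasure (muA ns) (Bplus ns (real ?N ^ 3)) \<noteq> top"
    using N by (intro emeasure_Bplus_finite) simp_all
  ultimately show ?thesis
    by (simp add: emeasure_eq_ennreal_measure)
qed

section \<open>Asymptotics\<close>

lemma tendsto_power_mult_exp_neg:
  assumes g: "0 < (g::real)"
  shows "((\<lambda>R. R ^ n * exp (- g * R)) \<longlongrightarrow> 0) at_top"
proof -
  have lim: "filterlim (\<lambda>R. g * R) at_top at_top"
    by (rule filterlim_tendsto_pos_mult_at_top[OF tendsto_const g filterlim_ident])
  have "((\<lambda>R. (g * R) ^ n / exp (g * R)) \<longlongrightarrow> 0) at_top"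
    using filterlim_compose[OF tendsto_power_div_exp_0 lim] by (simp add: o_def)
  then have "((\<lambda>R. (g * R) ^ n / exp (g * R) / g ^ n) \<longlongrightarrow> 0 / g ^ n) at_top"
    using g by (intro tendsto_divide tendsto_const) simp_all
  moreover have "(g * R) ^ n / exp (g * R) / g ^ n = R ^ n * exp (- g * R)" for R
    using g by (simp add: power_mult_distrib exp_minus field_simps)
  ultimately show ?thesis by simp
qed

lemma tendsto_ratio_exp_0:
  fixes f g :: "real \<Rightarrow> real"
  assumes K: "K' < K" and a: "0 < a"
    and bounds: "eventually (\<lambda>R. a * exp (K * R) \<le> f R \<and> 0 \<le> g R \<and> g R \<le> b * R ^ n * exp (K' * R)) at_top"
  shows "((\<lambda>R. g R / f R) \<longlongrightarrow> 0) at_top"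
proof (rule tendsto_sandwich)
  show "eventually (\<lambda>R. 0 \<le> g R / f R) at_top"
    using bounds by eventually_elim (metis a divide_nonneg_pos exp_gt_zero mult_pos_pos order.strict_trans2)
  show "eventually (\<lambda>R. g R / f R \<le> b / a * (R ^ n * exp (- (K - K') * R))) at_top"
    using bounds
  proof eventually_elim
    case (elim R)
    have pos: "0 < a * exp (K * R)"
      using a by simp
    then have "0 < f R"
      using elim by linarith
    then have "g R / f R \<le> g R / (a * exp (K * R))"
      using elim pos by (intro divide_left_mono) auto
    also have "\<dots> \<le> b * R ^ n * exp (K' * R) / (a * exp (K * R))"
      using elim a by (intro divide_right_mono) auto
    also have "\<dots> = b / a * (R ^ n * exp (- (K - K') * R))"
      by (simp add: exp_diff algebra_simps field_simps)
    finally show ?case .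
  qed
  show "((\<lambda>R. b / a * (R ^ n * exp (- (K - K') * R))) \<longlongrightarrow> 0) at_top"
    using K by (intro tendsto_mult_right_zero tendsto_power_mult_exp_neg) simp
qed simp

lemma measure_le_of_emeasure_le: "emeasure M S \<le> ennreal c \<Longrightarrow> 0 \<le> c \<Longrightarrow> measure M S \<le> c"
  unfolding measure_def by (rule enn2real_leI)

lemma Bplus_mono: "R1 \<le> R2 \<Longrightarrow> Bplus ns R1 \<subseteq> Bplus ns R2"
  by (auto simp: Bplus_def Ba_def)

lemma Bplus_subset_BCplus:
  assumes C: "C \<le> 0"
  shows "Bplus ns R \<subseteq> BCplus ns C R"
proof safe
  fix x y assume xy: "(x, y) \<in> Bplus ns R"
  then have x: "x \<in> aplusM ns" and y: "y \<in> aplusI ns" and B: "(x, y) \<in> Ba ns R"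
    by (auto simp: Bplus_def)
  have "sum x (blk ns s) = 0" for s
    using x blk_empty[of ns s] by (cases "s < length ns") (auto simp: aplusM_def aM_def)
  then have "(\<Sum>i<cut ns k. x i) = 0" for k
    by (simp add: sum_lessThan_cut)
  then have "(\<Sum>i<cut ns k. x i + y i) = (\<Sum>i<cut ns k. y i)" for k
    by (simp add: sum.distrib)
  then show "(x, y) \<in> BCplus ns C R"
    using x y B C
    by (auto simp: BCplus_def coneC_def aplusM_def aplusI_def aI_def aM_def afrak_def sum.distrib)
qed

lemma measure_Bplus_exp_lower_bound:
  assumes N: "2 \<le> sum_list ns"
  shows "\<exists>a>0. eventually (\<lambda>R. a * exp (rho_norm (sum_list ns) * R) \<le> measure (muA ns) (Bplus ns R)) at_top"
proof -
  define R0 where "R0 = real (sum_list ns) ^ 3"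
  define K where "K = rho_norm (sum_list ns)"
  let ?a = "measure (muA ns) (Bplus ns R0) * exp (- R0 * K)"
  have "0 < ?a"
    using measure_Bplus_pos[OF N] by (simp add: R0_def)
  moreover have "eventually (\<lambda>R. ?a * exp (K * R) \<le> measure (muA ns) (Bplus ns R)) at_top"
    using eventually_ge_at_top[of R0]
  proof eventually_elim
    case (elim R)
    have "?a * exp (K * R) = exp ((R - R0) * K) * measure (muA ns) (Bplus ns R0)"
      by (simp add: exp_add[symmetric] algebra_simps)
    also have "\<dots> \<le> measure (muA ns) (Bplus ns R)"
      unfolding K_def by (rule measure_Bplus_growth[OF N _ elim]) (simp add: R0_def)
    finally show ?case .
  qed
  ultimately show ?thesis
    unfolding K_def by blast
qed

lemma tendsto_BCplus_ratio:
  assumes N: "2 \<le> sum_list ns" and C: "C \<le> 0"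
  shows "((\<lambda>R. measure (muA ns) (BCplus ns C R) / measure (muA ns) (Bplus ns R)) \<longlongrightarrow> 1) at_top"
proof -
  let ?N = "sum_list ns" and ?K = "rho_norm (sum_list ns)"
  let ?d = "\<lambda>R. measure (muA ns) (BCplus ns C R - Bplus ns R)"
  obtain a where a: "0 < a"
    and lower: "eventually (\<lambda>R. a * exp (?K * R) \<le> measure (muA ns) (Bplus ns R)) at_top"
    using measure_Bplus_exp_lower_bound[OF N] by blast
  have "sqrt (?K\<^sup>2 - 1) < sqrt (?K\<^sup>2)"
    by (rule real_sqrt_less_mono) simp
  then have K': "sqrt (?K\<^sup>2 - 1) < ?K"
    using rho_norm_nonneg[of ?N] by simp
  have bounds: "eventually (\<lambda>R. a * exp (?K * R) \<le> measure (muA ns) (Bplus ns R) \<and> 0 \<le> ?d R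
      \<and> ?d R \<le> (sqrt ?N * 2 ^ (?N - 1)) * R ^ (?N - 1) * exp (sqrt (?K\<^sup>2 - 1) * R)) at_top"
    using lower eventually_ge_at_top[of 0]
  proof eventually_elim
    case (elim R)
    then show ?case
      using emeasure_BCplus_diff_le[OF N elim(2) C]
      by (auto intro!: measure_le_of_emeasure_le simp: power_mult_distrib algebra_simps)
  qed
  have "eventually (\<lambda>R. 1 + ?d R / measure (muA ns) (Bplus ns R)
      = measure (muA ns) (BCplus ns C R) / measure (muA ns) (Bplus ns R)) at_top"
    using lower eventually_ge_at_top[of 0]
  proof eventually_elim
    case (elim R)
    have fin: "emeasure (muA ns) (BCplus ns C R) \<noteq> top"
      using N elim(2) by (intro emeasure_BCplus_finite) simp_all
    have "0 < measure (muA ns) (Bplus ns R)"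
      using elim(1) a by (smt (verit) exp_gt_zero mult_pos_pos)
    moreover have "?d R = measure (muA ns) (BCplus ns C R) - measure (muA ns) (Bplus ns R)"
      using fin Bplus_subset_BCplus[OF C] sets_BCplus sets_Bplus by (intro measure_Diff) auto
    ultimately show ?case by (simp add: field_simps)
  qed
  moreover have "((\<lambda>R. 1 + ?d R / measure (muA ns) (Bplus ns R)) \<longlongrightarrow> 1 + 0) at_top"
    by (intro tendsto_add tendsto_const tendsto_ratio_exp_0[OF K' a bounds])
  ultimately show ?thesis
    using Lim_transform_eventually by fastforce
qed

lemma emeasure_Bplus_delta_ratio:
  assumes N: "1 \<le> sum_list ns" and R: "0 \<le> R" and \<delta>: "0 \<le> \<delta>" "\<delta> \<le> 1"
    and less: "measure (muA ns) (Bplus ns (\<delta> * R)) < measure (muA ns) (Bplus ns R)"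
  shows "emeasure (muA ns) (Bplus ns R) / emeasure (muA ns) (Bplus_delta ns R \<delta>)
    = ennreal (1 / (1 - measure (muA ns) (Bplus ns (\<delta> * R)) / measure (muA ns) (Bplus ns R)))"
proof -
  let ?x = "measure (muA ns) (Bplus ns R)" and ?y = "measure (muA ns) (Bplus ns (\<delta> * R))"
  have fin: "emeasure (muA ns) (Bplus ns R) \<noteq> top"
    using N R by (simp add: emeasure_Bplus_finite)
  have "Bplus ns (\<delta> * R) \<subseteq> Bplus ns R"
    using R \<delta> by (intro Bplus_mono) (simp add: mult_left_le_one_le)
  then have "measure (muA ns) (Bplus_delta ns R \<delta>) = ?x - ?y"
    unfolding Bplus_delta_def using fin sets_Bplus by (intro measure_Diff) auto
  moreover have "emeasure (muA ns) (Bplus_delta ns R \<delta>) \<noteq> top"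
    using N R sets_Bplus by (intro emeasure_muA_finite[of ns R]) (auto simp: Bplus_delta_def Bplus_def)
  ultimately have "emeasure (muA ns) (Bplus_delta ns R \<delta>) = ennreal (?x - ?y)"
    by (simp add: emeasure_eq_ennreal_measure)
  moreover have "0 < ?x"
    using less measure_nonneg[of "muA ns" "Bplus ns (\<delta> * R)"] by linarith
  ultimately have "emeasure (muA ns) (Bplus ns R) / emeasure (muA ns) (Bplus_delta ns R \<delta>)
      = ennreal (?x / (?x - ?y))"
    using fin less by (simp add: emeasure_eq_ennreal_measure divide_ennreal)
  also have "?x / (?x - ?y) = 1 / (1 - ?y / ?x)"
    using \<open>0 < ?x\<close> by (simp add: field_simps)
  finally show ?thesis .
qed

lemma Limsup_Bplus_delta_half_ratio:
  assumes N: "2 \<le> sum_list ns"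
  shows "Limsup at_top (\<lambda>R. emeasure (muA ns) (Bplus ns R) / emeasure (muA ns) (Bplus_delta ns R (1/2))) = 1"
proof (rule lim_imp_Limsup)
  let ?N = "sum_list ns" and ?K = "rho_norm (sum_list ns)"
  let ?x = "\<lambda>R. measure (muA ns) (Bplus ns R)" and ?y = "\<lambda>R. measure (muA ns) (Bplus ns (1/2 * R))"
  obtain a where a: "0 < a" and lower: "eventually (\<lambda>R. a * exp (?K * R) \<le> ?x R) at_top"
    using measure_Bplus_exp_lower_bound[OF N] by blast
  have K: "?K / 2 < ?K"
    using rho_norm_pos[OF N] by simp
  have "eventually (\<lambda>R. a * exp (?K * R) \<le> ?x R \<and> 0 \<le> ?y R
      \<and> ?y R \<le> sqrt ?N * R ^ (?N - 1) * exp (?K / 2 * R)) at_top"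
    using lower eventually_ge_at_top[of 0]
  proof eventually_elim
    case (elim R)
    have "emeasure (muA ns) (Bplus ns (1/2 * R)) \<le> emeasure (muA ns) (Ba ns (1/2 * R))"
      by (intro emeasure_mono) (auto simp: Bplus_def sets_Ba)
    also have "\<dots> \<le> ennreal (sqrt ?N * exp (?K * (1/2 * R)) * (2 * (1/2 * R)) ^ (?N - 1))"
      using N elim(2) by (intro emeasure_Ba_le) simp_all
    finally have "?y R \<le> sqrt ?N * exp (?K * (1/2 * R)) * (2 * (1/2 * R)) ^ (?N - 1)"
      using elim(2) by (intro measure_le_of_emeasure_le) simp_all
    then show ?case
      using elim by (simp add: algebra_simps)
  qed
  then have q: "((\<lambda>R. ?y R / ?x R) \<longlongrightarrow> 0) at_top"
    by (rule tendsto_ratio_exp_0[OF K a])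
  have "((\<lambda>R. ennreal (1 / (1 - ?y R / ?x R))) \<longlongrightarrow> ennreal (1 / (1 - 0))) at_top"
    by (intro tendsto_ennrealI tendsto_divide tendsto_diff tendsto_const q) simp
  moreover have "eventually (\<lambda>R. ennreal (1 / (1 - ?y R / ?x R))
      = emeasure (muA ns) (Bplus ns R) / emeasure (muA ns) (Bplus_delta ns R (1/2))) at_top"
    using lower eventually_ge_at_top[of 0] order_tendstoD(2)[OF q zero_less_one]
  proof eventually_elim
    case (elim R)
    have "0 < ?x R"
      using elim(1) a by (smt (verit) exp_gt_zero mult_pos_pos)
    then show ?case
      using N elim by (intro emeasure_Bplus_delta_ratio[symmetric]) (simp_all add: divide_less_eq)
  qed
  ultimately have "((\<lambda>R. emeasure (muA ns) (Bplus ns R) / emeasure (muA ns) (Bplus_delta ns R (1/2)))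
      \<longlongrightarrow> ennreal (1 / (1 - 0))) at_top"
    by (rule Lim_transform_eventually)
  then show "((\<lambda>R. emeasure (muA ns) (Bplus ns R) / emeasure (muA ns) (Bplus_delta ns R (1/2)))
      \<longlongrightarrow> 1) at_top"
    by simp
qed simp

theorem lemma4p13:
  fixes N :: nat and ns :: "nat list"
  assumes "N \<ge> 2" and "valid_partition ns N"
  shows "(\<forall>C::real. C < 0 \<longrightarrow>
           ((\<lambda>R. measure (muA ns) (BCplus ns C R) / measure (muA ns) (Bplus ns R))
              \<longlongrightarrow> 1) at_top)
       \<and> (\<forall>\<epsilon>::real. 0 < \<epsilon> \<and> \<epsilon> < 1 \<longrightarrow>
           (\<exists>\<delta>::real. \<delta> > 0 \<and>
              Limsup at_top (\<lambda>R::real. emeasure (muA ns) (Bplus ns R)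
                                     / emeasure (muA ns) (Bplus_delta ns R \<delta>))
                \<le> ennreal (min (1 + \<epsilon>) (1 / (1 - \<epsilon>)))))"
proof (intro conjI allI impI)
  have N: "2 \<le> sum_list ns"
    using assms by (simp add: valid_partition_def)
  show "((\<lambda>R. measure (muA ns) (BCplus ns C R) / measure (muA ns) (Bplus ns R)) \<longlongrightarrow> 1) at_top"
    if "C < 0" for C
    using that by (intro tendsto_BCplus_ratio[OF N]) simp
  show "\<exists>\<delta>>0. Limsup at_top (\<lambda>R. emeasure (muA ns) (Bplus ns R) / emeasure (muA ns) (Bplus_delta ns R \<delta>))
      \<le> ennreal (min (1 + \<epsilon>) (1 / (1 - \<epsilon>)))"
    if "0 < \<epsilon> \<and> \<epsilon> < 1" for \<epsilon>
  proof (intro exI conjI)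
    have "1 \<le> min (1 + \<epsilon>) (1 / (1 - \<epsilon>))"
      using that by simp
    then show "Limsup at_top (\<lambda>R. emeasure (muA ns) (Bplus ns R)
        / emeasure (muA ns) (Bplus_delta ns R (1/2))) \<le> ennreal (min (1 + \<epsilon>) (1 / (1 - \<epsilon>)))"
      by (simp add: Limsup_Bplus_delta_half_ratio[OF N] ennreal_ge_1)
  qed simp
qed

end
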